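(* Let $K_{m_1,m_2}$ be the complete bipartite graph with bipartition $(X,Y)$, $X=\{x_1,\dots,x_{m_1}\}$, $Y=\{y_1,\dots,y_{m_2}\}$, where $2\le m_1\le m_2$. Let $s$ and $i$ be integers with $\max\{1,s-m_2\}\le i\le \min\{m_1,s-1\}$, and let $S_i=\{x_1,\dots,x_i,y_1,\dots,y_{s-i}\}$. If $s\le m_2-m_1+2$, then $\kappa^*_{K_{m_1,m_2}}(S_i)=m_1$.
   Context: For $S\subseteq V(G)$ with $|S|\ge 2$, an $S$-Steiner tree of $G$ is a subtree $T$ of $G$ with $S\subseteq V(T)$ all of whose leaves belong to $S$. A family of $S$-Steiner trees $T_1,\dots,T_k$ is completely independent if for all $1\le p<q\le k$: $E(T_p)\cap E(T_q)=\emptyset$, $V(T_p)\cap V(T_q)=S$, and for any two vertices $x_1,x_2\in S$ the $(x_1,x_2)$-paths in $T_p$ and in $T_q$ are internally disjoint. $\kappa^*_G(S)$ is the maximum number of trees in a completely independent family of $S$-Steiner trees in $G$. *)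

theory Defs
  imports Main
begin

text \<open>Simple graphs are given by a vertex set V and an edge set E of 2-element subsets.\<close>

definition path_in :: "'a set set \<Rightarrow> 'a list \<Rightarrow> 'a \<Rightarrow> 'a \<Rightarrow> bool" where
  "path_in E P u v \<longleftrightarrow> P \<noteq> [] \<and> hd P = u \<and> last P = v \<and> distinct P \<and>
     (\<forall>j. Suc j < length P \<longrightarrow> {P ! j, P ! Suc j} \<in> E)"

definition is_cycle_in :: "'a set set \<Rightarrow> 'a list \<Rightarrow> bool" where
  "is_cycle_in E C \<longleftrightarrow> length C \<ge> 3 \<and> distinct C \<and>
     (\<forall>j. Suc j < length C \<longrightarrow> {C ! j, C ! Suc j} \<in> E) \<and> {last C, hd C} \<in> E"

definition is_tree :: "'a set \<Rightarrow> 'a set set \<Rightarrow> bool" where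
  "is_tree VT ET \<longleftrightarrow> finite VT \<and> VT \<noteq> {} \<and>
     (\<forall>e\<in>ET. \<exists>u v. e = {u, v} \<and> u \<noteq> v \<and> u \<in> VT \<and> v \<in> VT) \<and>
     (\<forall>u\<in>VT. \<forall>v\<in>VT. \<exists>P. path_in ET P u v) \<and>
     (\<nexists>C. is_cycle_in ET C)"

definition subtree_of :: "'a set \<Rightarrow> 'a set set \<Rightarrow> 'a set \<times> 'a set set \<Rightarrow> bool" where
  "subtree_of V E T \<longleftrightarrow> fst T \<subseteq> V \<and> snd T \<subseteq> E \<and> is_tree (fst T) (snd T)"

definition degree_in :: "'a set set \<Rightarrow> 'a \<Rightarrow> nat" where
  "degree_in E v = card {e \<in> E. v \<in> e}"

definition steiner_tree :: "'a set \<Rightarrow> 'a set set \<Rightarrow> 'a set \<Rightarrow> 'a set \<times> 'a set set \<Rightarrow> bool" where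
  "steiner_tree V E S T \<longleftrightarrow> subtree_of V E T \<and> S \<subseteq> fst T \<and>
     (\<forall>v\<in>fst T. degree_in (snd T) v = 1 \<longrightarrow> v \<in> S)"

definition completely_independent ::
  "'a set \<Rightarrow> 'a set set \<Rightarrow> 'a set \<Rightarrow> nat \<Rightarrow> (nat \<Rightarrow> 'a set \<times> 'a set set) \<Rightarrow> bool" where
  "completely_independent V E S k T \<longleftrightarrow>
     (\<forall>p<k. steiner_tree V E S (T p)) \<and>
     (\<forall>p q. p < q \<and> q < k \<longrightarrow>
        snd (T p) \<inter> snd (T q) = {} \<and>
        fst (T p) \<inter> fst (T q) = S \<and>
        (\<forall>x1\<in>S. \<forall>x2\<in>S. \<forall>P Q. path_in (snd (T p)) P x1 x2 \<longrightarrow> path_in (snd (T q)) Q x1 x2 \<longrightarrow>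
            set (butlast (tl P)) \<inter> set (butlast (tl Q)) = {}))"

definition kappa_star :: "'a set \<Rightarrow> 'a set set \<Rightarrow> 'a set \<Rightarrow> nat" where
  "kappa_star V E S = (GREATEST k. \<exists>T. completely_independent V E S k T)"

text \<open>Complete bipartite graph K_{m1,m2}: x_a = Inl a (1 \<le> a \<le> m1), y_b = Inr b (1 \<le> b \<le> m2).\<close>
definition Kbip_V :: "nat \<Rightarrow> nat \<Rightarrow> (nat + nat) set" where
  "Kbip_V m1 m2 = Inl ` {1..m1} \<union> Inr ` {1..m2}"

definition Kbip_E :: "nat \<Rightarrow> nat \<Rightarrow> (nat + nat) set set" where
  "Kbip_E m1 m2 = {{Inl a, Inr b} | a b. a \<in> {1..m1} \<and> b \<in> {1..m2}}"

definition S_set :: "nat \<Rightarrow> nat \<Rightarrow> (nat + nat) set" where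
  "S_set s i = Inl ` {1..i} \<union> Inr ` {1..s - i}"

end

theory Submission
  imports Defs "HOL-Library.Transitive_Closure_Table"
begin

(*
  Upper bound: y_1 lies in S together with some other vertex, so every tree of the family
  contains an edge at y_1; the trees are edge-disjoint, hence there are at most deg y_1 = m1
  of them.

  Lower bound: take m1 double stars. The p-th one has hubs x_(p+1) and a vertex y' of Y, joins
  x_(p+1) to y' and to every vertex of S in Y, and y' to every vertex of S in X. All other
  vertices are pendant, so internal vertices of its paths are hubs; with pairwise disjoint
  hubs the trees share only S and no internal path vertices. The bound s <= m2 - m1 + 2
  leaves room for the hubs y' outside S.
*)

lemma path_in_internal_two_neighbours:
  assumes "path_in E P u v" "w \<in> set (butlast (tl P))"
  obtains x y where "x \<noteq> y" "{w, x} \<in> E" "{w, y} \<in> E"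
proof -
  from assms(2) obtain j where j: "j < length (butlast (tl P))" "butlast (tl P) ! j = w"
    by (auto simp: in_set_conv_nth)
  have len: "Suc (Suc j) < length P" using j(1) by simp
  have w: "P ! Suc j = w" using j len by (simp add: nth_butlast nth_tl)
  have "{P ! j, w} \<in> E" "{w, P ! Suc (Suc j)} \<in> E"
    using assms(1) len w by (auto simp: path_in_def)
  moreover have "P ! j \<noteq> P ! Suc (Suc j)"
    using assms(1) len by (simp add: path_in_def nth_eq_iff_index_eq)
  ultimately show ?thesis using that by (metis insert_commute)
qed

lemma is_cycle_in_two_neighbours:
  assumes "is_cycle_in E C" "j < length C"
  obtains x y where "x \<noteq> y" "{C ! j, x} \<in> E" "{C ! j, y} \<in> E"
proof -
  let ?n = "length C"
  have n: "3 \<le> ?n" and d: "distinct C" and step: "\<And>j. Suc j < ?n \<Longrightarrow> {C ! j, C ! Suc j} \<in> E"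
    using assms(1) by (auto simp: is_cycle_in_def)
  then have "C \<noteq> []" by auto
  then have wrap: "{C ! (?n - 1), C ! 0} \<in> E"
    using assms(1) by (simp add: is_cycle_in_def last_conv_nth hd_conv_nth)
  define pred where "pred = (if j = 0 then ?n - 1 else j - 1)"
  define succ where "succ = (if j = ?n - 1 then 0 else Suc j)"
  have "{C ! j, C ! pred} \<in> E"
    using step[of "j - 1"] wrap assms(2) by (auto simp: pred_def insert_commute)
  moreover have "{C ! j, C ! succ} \<in> E"
    using step[of j] wrap assms(2) by (auto simp: succ_def insert_commute)
  moreover have "pred \<noteq> succ" "pred < ?n" "succ < ?n"
    using n assms(2) by (auto simp: pred_def succ_def)
  then have "C ! pred \<noteq> C ! succ"
    using d by (simp add: nth_eq_iff_index_eq)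
  ultimately show ?thesis using that by blast
qed

lemma path_in_internal_in_hubs:
  assumes pendant: "\<And>v x y. v \<notin> H \<Longrightarrow> {v, x} \<in> E \<Longrightarrow> {v, y} \<in> E \<Longrightarrow> x = y"
    and "path_in E P u v"
  shows "set (butlast (tl P)) \<subseteq> H"
  using path_in_internal_two_neighbours[OF assms(2)] pendant by blast

lemma no_cycle_with_two_hubs:
  assumes pendant: "\<And>v x y. v \<notin> {a, c} \<Longrightarrow> {v, x} \<in> E \<Longrightarrow> {v, y} \<in> E \<Longrightarrow> x = y"
  shows "\<not> is_cycle_in E C"
proof
  assume cycle: "is_cycle_in E C"
  then have n: "3 \<le> length C" and d: "distinct C" by (auto simp: is_cycle_in_def)
  have branch: "C ! j \<in> {a, c}" if "j < length C" for j
    using is_cycle_in_two_neighbours[OF cycle that] pendant by metis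
  have "C ! p \<noteq> C ! q" if "p < q" "q < 3" for p q
    using d n that by (simp add: nth_eq_iff_index_eq)
  then have "C ! 0 \<noteq> C ! 1" "C ! 0 \<noteq> C ! 2" "C ! 1 \<noteq> C ! 2"
    by simp_all
  moreover have "C ! j \<in> {a, c}" if "j < 3" for j
    using n that by (intro branch) linarith
  then have "C ! 0 \<in> {a, c}" "C ! 1 \<in> {a, c}" "C ! 2 \<in> {a, c}"
    by simp_all
  ultimately show False by auto
qed

lemma path_in_if_rtranclp_common:
  assumes "\<And>u. u \<in> VT \<Longrightarrow> (\<lambda>x y. {x, y} \<in> E)\<^sup>*\<^sup>* u a" "u \<in> VT" "v \<in> VT"
  obtains P where "path_in E P u v"
proof -
  let ?R = "\<lambda>x y. {x, y} \<in> E"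
  have "?R\<inverse>\<inverse> = ?R" by (auto simp: insert_commute fun_eq_iff)
  then have "?R\<^sup>*\<^sup>* a v" using rtranclp_converseI[OF assms(1)[OF assms(3)]] by simp
  then have "?R\<^sup>*\<^sup>* u v" using assms(1)[OF assms(2)] by (meson rtranclp_trans)
  then obtain xs where "rtrancl_path ?R u xs v" by (auto simp: rtranclp_eq_rtrancl_path)
  then obtain xs' where xs': "rtrancl_path ?R u xs' v" "distinct (u # xs')"
    by (rule rtrancl_path_distinct)
  have "last (u # xs') = v"
    using xs'(1) by (cases "xs' = []") (auto elim: rtrancl_path.cases dest: rtrancl_path_last)
  then have "path_in E (u # xs') u v"
    using rtrancl_path_nth[OF xs'(1)] xs'(2) by (auto simp: path_in_def)
  then show ?thesis by (rule that)
qed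

lemma path_in_first_edge:
  assumes "path_in E P u v" "u \<noteq> v"
  obtains x where "{u, x} \<in> E"
proof -
  obtain x xs where P: "P = u # x # xs"
    using assms by (cases P; cases "tl P") (auto simp: path_in_def)
  have "\<forall>j. Suc j < length P \<longrightarrow> {P ! j, P ! Suc j} \<in> E"
    using assms(1) by (simp add: path_in_def)
  from this[rule_format, of 0] P show ?thesis by (simp add: that)
qed

lemma degree_in_ne_1:
  assumes "finite E" "{v, x} \<in> E" "{v, y} \<in> E" "x \<noteq> y"
  shows "degree_in E v \<noteq> 1"
proof
  assume "degree_in E v = 1"
  then obtain e where "{e \<in> E. v \<in> e} = {e}"
    unfolding degree_in_def by (rule card_1_singletonE)
  then have "{v, x} \<in> {e}" "{v, y} \<in> {e}"
    using assms(2,3) by (metis (mono_tags, lifting) insertI1 mem_Collect_eq)+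
  then have "{v, x} = e" "{v, y} = e" by simp_all
  with assms(4) show False by (auto simp: doubleton_eq_iff)
qed

definition double_star :: "'a \<Rightarrow> 'a \<Rightarrow> 'a set \<Rightarrow> 'a set \<Rightarrow> 'a set \<times> 'a set set" where
  "double_star a c A B =
     (insert a (insert c (A \<union> B)), (\<lambda>b. {a, b}) ` insert c B \<union> (\<lambda>x. {c, x}) ` insert a A)"

lemma fst_double_star [simp]: "fst (double_star a c A B) = insert a (insert c (A \<union> B))"
  by (simp add: double_star_def)

locale double_star_hubs =
  fixes a c :: 'a and A B :: "'a set"
  assumes finite_sides: "finite A" "finite B"
    and disjoint_sides: "A \<inter> B = {}"
    and hubs_sides: "a \<notin> B" "c \<notin> A"
    and hubs_distinct: "a \<noteq> c"
begin

lemma edge_at_hub: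
  assumes "e \<in> snd (double_star a c A B)"
  obtains h w where "h \<in> {a, c}" "e = {h, w}"
  using assms by (auto simp: double_star_def)

lemma edge_at_non_hub:
  assumes "v \<notin> {a, c}" "{v, x} \<in> snd (double_star a c A B)"
  shows "v \<in> A \<and> x = c \<or> v \<in> B \<and> x = a"
  using assms by (auto simp: double_star_def doubleton_eq_iff)

lemma non_hub_unique_neighbour:
  assumes "v \<notin> {a, c}" "{v, x} \<in> snd (double_star a c A B)" "{v, y} \<in> snd (double_star a c A B)"
  shows "x = y"
  using edge_at_non_hub[OF assms(1,2)] edge_at_non_hub[OF assms(1,3)] disjoint_sides by blast

lemma internal_vertices_hubs:
  assumes "path_in (snd (double_star a c A B)) P u v"
  shows "set (butlast (tl P)) \<subseteq> {a, c}"
  by (rule path_in_internal_in_hubs[OF non_hub_unique_neighbour assms])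

lemma is_tree: "is_tree (fst (double_star a c A B)) (snd (double_star a c A B))"
proof -
  let ?V = "fst (double_star a c A B)" and ?E = "snd (double_star a c A B)"
  have edges: "\<exists>u v. e = {u, v} \<and> u \<noteq> v \<and> u \<in> ?V \<and> v \<in> ?V" if "e \<in> ?E" for e
    using that hubs_sides hubs_distinct by (auto simp: double_star_def)
  have reach_a: "(\<lambda>x y. {x, y} \<in> ?E)\<^sup>*\<^sup>* u a" if u: "u \<in> ?V" for u
  proof -
    have ca: "{c, a} \<in> ?E" by (simp add: double_star_def insert_commute)
    consider "u = a" | "u \<in> insert c B" | "u \<in> A"
      using u by auto
    then show ?thesis
    proof cases
      case 2
      then have "{u, a} \<in> ?E" by (auto simp: double_star_def insert_commute)
      then show ?thesis by (rule r_into_rtranclp)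
    next
      case 3
      then have "{u, c} \<in> ?E" by (auto simp: double_star_def insert_commute)
      with ca show ?thesis by (meson converse_rtranclp_into_rtranclp r_into_rtranclp)
    qed simp
  qed
  have "\<not> is_cycle_in ?E C" for C
    by (rule no_cycle_with_two_hubs[OF non_hub_unique_neighbour])
  moreover have "\<exists>P. path_in ?E P u v" if "u \<in> ?V" "v \<in> ?V" for u v
    using path_in_if_rtranclp_common[OF reach_a that] by blast
  moreover have "finite ?V" "?V \<noteq> {}"
    using finite_sides by (auto simp: double_star_def)
  ultimately show ?thesis
    unfolding is_tree_def using edges by blast
qed

lemma steiner_tree:
  assumes "fst (double_star a c A B) \<subseteq> V" "snd (double_star a c A B) \<subseteq> E"
    and "a \<notin> A \<Longrightarrow> \<exists>b\<in>B. b \<noteq> c" "c \<notin> B \<Longrightarrow> \<exists>x\<in>A. x \<noteq> a"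
  shows "steiner_tree V E (A \<union> B) (double_star a c A B)"
proof -
  let ?E = "snd (double_star a c A B)"
  have fin: "finite ?E" using finite_sides by (simp add: double_star_def)
  have "degree_in ?E a \<noteq> 1" if a: "a \<notin> A"
  proof -
    obtain b where "b \<in> B" "b \<noteq> c" using assms(3)[OF a] by blast
    moreover from \<open>b \<in> B\<close> have "{a, b} \<in> ?E" "{a, c} \<in> ?E" by (simp_all add: double_star_def)
    ultimately show ?thesis using degree_in_ne_1[OF fin] by blast
  qed
  moreover have "degree_in ?E c \<noteq> 1" if c: "c \<notin> B"
  proof -
    obtain x where "x \<in> A" "x \<noteq> a" using assms(4)[OF c] by blast
    moreover from \<open>x \<in> A\<close> have "{c, x} \<in> ?E" "{c, a} \<in> ?E" by (simp_all add: double_star_def)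
    ultimately show ?thesis using degree_in_ne_1[OF fin] by blast
  qed
  ultimately have "v \<in> A \<union> B" if "v \<in> fst (double_star a c A B)" "degree_in ?E v = 1" for v
    using that hubs_sides by auto
  then show ?thesis
    using assms(1,2) is_tree unfolding steiner_tree_def subtree_of_def by auto
qed

end

lemma completely_independent_double_stars:
  assumes hubs: "\<And>p. p < k \<Longrightarrow> double_star_hubs (a p) (c p) A B"
    and trees: "\<And>p. p < k \<Longrightarrow> steiner_tree V E (A \<union> B) (double_star (a p) (c p) A B)"
    and hubs_disjoint: "\<And>p q. p < q \<Longrightarrow> q < k \<Longrightarrow> {a p, c p} \<inter> {a q, c q} = {}"
    \<comment> \<open>otherwise the edge \<open>{a p, c q}\<close> lies in both trees\<close>
    and hubs_not_joined: "\<And>p q. p < k \<Longrightarrow> q < k \<Longrightarrow> p \<noteq> q \<Longrightarrow> a p \<in> A \<Longrightarrow> c q \<notin> B"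
  shows "completely_independent V E (A \<union> B) k (\<lambda>p. double_star (a p) (c p) A B)"
  unfolding completely_independent_def
proof (intro conjI allI impI)
  fix p q assume pq: "p < q \<and> q < k"
  interpret P: double_star_hubs "a p" "c p" A B using hubs pq by simp
  interpret Q: double_star_hubs "a q" "c q" A B using hubs pq by simp
  have disj: "{a p, c p} \<inter> {a q, c q} = {}" using hubs_disjoint pq by blast
  show "snd (double_star (a p) (c p) A B) \<inter> snd (double_star (a q) (c q) A B) = {}"
  proof (rule equals0I)
    fix e assume e: "e \<in> snd (double_star (a p) (c p) A B) \<inter> snd (double_star (a q) (c q) A B)"
    then obtain h w where h: "h \<in> {a p, c p}" and hw: "e = {h, w}"
      using P.edge_at_hub by blast
    have "h \<notin> {a q, c q}" using h disj by blast
    then have w: "h \<in> A \<and> w = c q \<or> h \<in> B \<and> w = a q"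
      using Q.edge_at_non_hub e hw by blast
    then have "w \<notin> {a p, c p}" using disj by blast
    moreover have "{w, h} \<in> snd (double_star (a p) (c p) A B)"
      using e hw by (simp add: insert_commute)
    ultimately have "w \<in> A \<and> h = c p \<or> w \<in> B \<and> h = a p"
      by (rule P.edge_at_non_hub)
    moreover have "a p \<in> A \<Longrightarrow> c q \<notin> B" "a q \<in> A \<Longrightarrow> c p \<notin> B"
      using hubs_not_joined[of p q] hubs_not_joined[of q p] pq by auto
    ultimately show False
      using w P.hubs_sides Q.hubs_sides by blast
  qed
  show "fst (double_star (a p) (c p) A B) \<inter> fst (double_star (a q) (c q) A B) = A \<union> B"
    using disj by (auto simp: double_star_def)
  show "\<forall>x1\<in>A \<union> B. \<forall>x2\<in>A \<union> B. \<forall>P Q.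
      path_in (snd (double_star (a p) (c p) A B)) P x1 x2 \<longrightarrow>
      path_in (snd (double_star (a q) (c q) A B)) Q x1 x2 \<longrightarrow>
      set (butlast (tl P)) \<inter> set (butlast (tl Q)) = {}"
    using P.internal_vertices_hubs Q.internal_vertices_hubs disj by blast
qed (use trees in blast)

lemma completely_independent_le_degree:
  assumes indep: "completely_independent V E S k T"
    and "finite E" "v \<in> S" "w \<in> S" "v \<noteq> w"
  shows "k \<le> degree_in E v"
proof -
  have "\<exists>e \<in> snd (T p). v \<in> e" if p: "p < k" for p
  proof -
    have "steiner_tree V E S (T p)" using indep p by (simp add: completely_independent_def)
    then have "is_tree (fst (T p)) (snd (T p))" "v \<in> fst (T p)" "w \<in> fst (T p)"
      using assms(3,4) by (auto simp: steiner_tree_def subtree_of_def)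
    then obtain P where "path_in (snd (T p)) P v w"
      unfolding is_tree_def by blast
    then show ?thesis by (rule path_in_first_edge) (use \<open>v \<noteq> w\<close> in auto)
  qed
  then obtain f where f: "\<And>p. p < k \<Longrightarrow> f p \<in> snd (T p) \<and> v \<in> f p" by metis
  have "inj_on f {..<k}"
  proof (rule inj_onI)
    fix p q assume "p \<in> {..<k}" "q \<in> {..<k}" "f p = f q"
    moreover have "snd (T p) \<inter> snd (T q) = {}" if "p < q" "q < k" for p q
      using indep that by (simp add: completely_independent_def)
    ultimately show "p = q" using f by (metis disjoint_iff lessThan_iff linorder_neqE_nat)
  qed
  moreover have "f ` {..<k} \<subseteq> {e \<in> E. v \<in> e}"
    using f indep by (force simp: completely_independent_def steiner_tree_def subtree_of_def)
  ultimately show ?thesis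
    unfolding degree_in_def using card_inj_on_le \<open>finite E\<close> by fastforce
qed

lemma double_star_hubs_bipartite:
  "finite I \<Longrightarrow> finite J \<Longrightarrow> double_star_hubs (Inl \<alpha>) (Inr \<beta>) (Inl ` I) (Inr ` J)"
  by unfold_locales auto

lemma doubleton_in_Kbip_E [simp]:
  "{Inl a, Inr b} \<in> Kbip_E m1 m2 \<longleftrightarrow> a \<in> {1..m1} \<and> b \<in> {1..m2}"
  by (auto simp: Kbip_E_def doubleton_eq_iff)

lemma double_star_in_Kbip:
  assumes "\<alpha> \<in> {1..m1}" "\<beta> \<in> {1..m2}" "I \<subseteq> {1..m1}" "J \<subseteq> {1..m2}"
  shows "fst (double_star (Inl \<alpha>) (Inr \<beta>) (Inl ` I) (Inr ` J)) \<subseteq> Kbip_V m1 m2"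
    and "snd (double_star (Inl \<alpha>) (Inr \<beta>) (Inl ` I) (Inr ` J)) \<subseteq> Kbip_E m1 m2"
  using assms by (auto simp: double_star_def Kbip_V_def insert_commute)

lemma finite_Kbip_E: "finite (Kbip_E m1 m2)"
proof (rule finite_subset)
  show "Kbip_E m1 m2 \<subseteq> Pow (Kbip_V m1 m2)"
    by (auto simp: Kbip_E_def Kbip_V_def)
qed (simp add: Kbip_V_def)

lemma degree_in_Kbip_E_Inr:
  assumes "b \<in> {1..m2}"
  shows "degree_in (Kbip_E m1 m2) (Inr b) = m1"
proof -
  have "{e \<in> Kbip_E m1 m2. Inr b \<in> e} = (\<lambda>a. {Inl a, Inr b}) ` {1..m1}"
  proof
    show "{e \<in> Kbip_E m1 m2. Inr b \<in> e} \<subseteq> (\<lambda>a. {Inl a, Inr b}) ` {1..m1}"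
      by (auto simp: Kbip_E_def)
  qed (use assms in auto)
  moreover have "inj_on (\<lambda>a. {Inl a, Inr b}) {1..m1}"
    by (auto simp: inj_on_def doubleton_eq_iff)
  ultimately show ?thesis by (simp add: degree_in_def card_image)
qed

text \<open>For \<open>i = 1\<close> the tree with hub \<open>x\<^sub>1\<close> needs its second hub inside S (here
  \<open>y\<^bsub>s-1\<^esub>\<close>): outside S it would be a leaf adjacent only to \<open>x\<^sub>1\<close>. All other
  second hubs lie outside S.\<close>
definition y_hub :: "nat \<Rightarrow> nat \<Rightarrow> nat \<Rightarrow> nat" where
  "y_hub s i p = s - i + p + (if i = 1 then 0 else 1)"

lemma completely_independent_Kbip_double_stars:
  assumes "1 \<le> i" "i \<le> m1" "i < s" "s + m1 \<le> m2 + 2"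
  shows "completely_independent (Kbip_V m1 m2) (Kbip_E m1 m2) (S_set s i) m1
           (\<lambda>p. double_star (Inl (Suc p)) (Inr (y_hub s i p)) (Inl ` {1..i}) (Inr ` {1..s - i}))"
proof -
  have y_range: "y_hub s i p \<in> {1..m2}" if "p < m1" for p
    using assms that by (auto simp: y_hub_def)
  have y_outside: "s - i < y_hub s i p" if "\<not> (i = 1 \<and> p = 0)" for p
    using that by (auto simp: y_hub_def)
  have y_inj: "y_hub s i p \<noteq> y_hub s i q" if "p < q" for p q
    using that by (simp add: y_hub_def)
  have trees: "steiner_tree (Kbip_V m1 m2) (Kbip_E m1 m2) (Inl ` {1..i} \<union> Inr ` {1..s - i})
      (double_star (Inl (Suc p)) (Inr (y_hub s i p)) (Inl ` {1..i}) (Inr ` {1..s - i}))"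
    if p: "p < m1" for p
  proof (rule double_star_hubs.steiner_tree[OF double_star_hubs_bipartite])
    have "Suc p \<in> {1..m1}" "{1..i} \<subseteq> {1..m1}" "{1..s - i} \<subseteq> {1..m2}"
      using p assms by auto
    from double_star_in_Kbip[OF this(1) y_range[OF p] this(2,3)]
    show "fst (double_star (Inl (Suc p)) (Inr (y_hub s i p)) (Inl ` {1..i}) (Inr ` {1..s - i}))
        \<subseteq> Kbip_V m1 m2"
     and "snd (double_star (Inl (Suc p)) (Inr (y_hub s i p)) (Inl ` {1..i}) (Inr ` {1..s - i}))
        \<subseteq> Kbip_E m1 m2"
      by simp_all
    show "\<exists>b\<in>Inr ` {1..s - i}. b \<noteq> Inr (y_hub s i p)" if "Inl (Suc p) \<notin> Inl ` {1..i}"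
    proof -
      have "\<not> (i = 1 \<and> p = 0)" using that by auto
      then have "1 < y_hub s i p" using y_outside[of p] assms by linarith
      then show ?thesis using assms by (intro bexI[of _ "Inr 1"]) auto
    qed
    show "\<exists>x\<in>Inl ` {1..i}. x \<noteq> Inl (Suc p)" if "Inr (y_hub s i p) \<notin> Inr ` {1..s - i}"
    proof -
      have "\<not> (i = 1 \<and> p = 0)" using that assms by (auto simp: y_hub_def)
      then have "Inl (if p = 0 then 2 else 1) \<in> Inl ` {1..i}" using assms by auto
      then show ?thesis by (rule bexI[rotated]) auto
    qed
  qed auto
  show ?thesis
    unfolding S_set_def
  proof (rule completely_independent_double_stars)
    show "\<And>p q. p < m1 \<Longrightarrow> q < m1 \<Longrightarrow> p \<noteq> q \<Longrightarrow> Inl (Suc p) \<in> Inl ` {1..i} \<Longrightarrow>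
        Inr (y_hub s i q) \<notin> Inr ` {1..s - i}"
      using y_outside by fastforce
  qed (use trees y_inj in \<open>auto intro!: double_star_hubs_bipartite\<close>)
qed

theorem theorem3p5:
  fixes m1 m2 s i :: nat
  assumes "2 \<le> m1" and "m1 \<le> m2"
    and "1 \<le> i" and "int s - int m2 \<le> int i"
    and "i \<le> m1" and "int i \<le> int s - 1"
    and "int s \<le> int m2 - int m1 + 2"
  shows "kappa_star (Kbip_V m1 m2) (Kbip_E m1 m2) (S_set s i) = m1"
  unfolding kappa_star_def
proof (rule Greatest_equality)
  have "i < s" "s + m1 \<le> m2 + 2" using assms by linarith+
  then show "\<exists>T. completely_independent (Kbip_V m1 m2) (Kbip_E m1 m2) (S_set s i) m1 T"
    using completely_independent_Kbip_double_stars assms by blast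
next
  fix k assume "\<exists>T. completely_independent (Kbip_V m1 m2) (Kbip_E m1 m2) (S_set s i) k T"
  moreover have "Inr 1 \<in> S_set s i" "Inl 1 \<in> S_set s i"
    using assms by (auto simp: S_set_def)
  ultimately show "k \<le> m1"
    using completely_independent_le_degree[OF _ finite_Kbip_E] degree_in_Kbip_E_Inr[of 1 m2 m1] assms
    by fastforce
qed

end
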